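(* Let $G$ be a simple graph of order $n$ and $m\ge 1$. Let $\alpha'(G)$ be the size of a maximum matching $M$ of $G$ and $l=n-2\alpha'(G)$ the number of $M$-unsaturated vertices of $G$. Then $s(G\circ P_m)=n\,s(P_m)+\alpha'(G)+l$ if $m\equiv 1\pmod 3$, and $s(G\circ P_m)=n\,s(P_m)$ otherwise.
   Context: A matching in a graph is a set of edges no two of which share a vertex; it is maximal if it is not properly contained in another matching, and maximum if it has the largest possible size. A vertex is $M$-unsaturated if no edge of $M$ is incident to it. The saturation number $s(G)$ is the minimum cardinality of a maximal matching of $G$. $P_m$ is the path on $m$ vertices; $s(P_m)=\lceil m/3\rceil$ if $m\equiv 2\pmod 3$ and $\lfloor m/3\rfloor$ otherwise. The corona $G_1\circ G_2$ is obtained by taking one copy of $G_1$ and $|V(G_1)|$ disjoint copies of $G_2$, and joining the $i$-th vertex of $G_1$ by an edge to every vertex of the $i$-th copy of $G_2$. *)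

theory Defs
  imports Main
begin

definition simple_graph :: "'a set \<Rightarrow> 'a set set \<Rightarrow> bool" where
  "simple_graph V E \<longleftrightarrow> finite V \<and>
     (\<forall>e\<in>E. \<exists>u v. u \<noteq> v \<and> u \<in> V \<and> v \<in> V \<and> e = {u, v})"

definition matching :: "'a set set \<Rightarrow> 'a set set \<Rightarrow> bool" where
  "matching E M \<longleftrightarrow> M \<subseteq> E \<and> (\<forall>e1\<in>M. \<forall>e2\<in>M. e1 \<noteq> e2 \<longrightarrow> e1 \<inter> e2 = {})"

definition maximal_matching :: "'a set set \<Rightarrow> 'a set set \<Rightarrow> bool" where
  "maximal_matching E M \<longleftrightarrow> matching E M \<and> (\<forall>M'. matching E M' \<and> M \<subseteq> M' \<longrightarrow> M' = M)"

definition saturation_number :: "'a set set \<Rightarrow> nat" where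
  "saturation_number E = Min (card ` {M. maximal_matching E M})"

definition matching_number :: "'a set set \<Rightarrow> nat" where
  "matching_number E = Max (card ` {M. matching E M})"

definition path_verts :: "nat \<Rightarrow> nat set" where
  "path_verts m = {0..<m}"

definition path_edges :: "nat \<Rightarrow> nat set set" where
  "path_edges m = {{i, Suc i} | i. Suc i < m}"

text \<open>Corona G1 o G2: vertex v of G1 is Inl v, vertex w of the v-th copy of G2 is Inr (v, w).\<close>
definition corona_verts :: "'a set \<Rightarrow> 'b set \<Rightarrow> ('a + 'a \<times> 'b) set" where
  "corona_verts V1 V2 = Inl ` V1 \<union> Inr ` (V1 \<times> V2)"

definition corona_edges ::
  "'a set \<Rightarrow> 'a set set \<Rightarrow> 'b set \<Rightarrow> 'b set set \<Rightarrow> ('a + 'a \<times> 'b) set set" where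
  "corona_edges V1 E1 V2 E2 =
     (image Inl) ` E1
   \<union> {(\<lambda>w. Inr (v, w)) ` e | v e. v \<in> V1 \<and> e \<in> E2}
   \<union> {{Inl v, Inr (v, w)} | v w. v \<in> V1 \<and> w \<in> V2}"

end

theory Submission
  imports Defs
begin

text \<open>
  A maximal matching of \<open>G \<circ> P\<^sub>m\<close> consists of a matching \<open>N\<close> of \<open>G\<close> and, at every vertex \<open>v\<close>
  of \<open>G\<close> (the hub of the \<open>v\<close>-th copy of \<open>P\<^sub>m\<close>), a matching of that copy plus at most one spoke
  at \<open>v\<close>, which together must dominate the edges of the copy. As \<open>k\<close> edges and \<open>s\<close> further
  vertices dominate \<open>P\<^sub>m\<close> only if \<open>m \<le> 3k + 2s + 1\<close>, every hub costs at least
  \<open>s(P\<^sub>m) = \<lfloor>(m + 1)/3\<rfloor>\<close> edges, and a hub not saturated by \<open>N\<close> costs \<open>\<lceil>m/3\<rceil>\<close> edges: either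
  it has a spoke, or its copy is perfectly matched. The two costs differ exactly when
  \<open>m \<equiv> 1 (mod 3)\<close>, so the total \<open>|N| + n s(P\<^sub>m) + [m \<equiv> 1] (n - 2|N|)\<close> is minimised by a maximum
  matching \<open>N\<close> in that case and by \<open>N = {}\<close> otherwise. Both costs are attained, by a minimum
  maximal matching of \<open>P\<^sub>m\<close> and by every third edge of \<open>P\<^sub>m\<close> together with a suitable spoke.
\<close>

section \<open>Matchings\<close>

lemma matching_subset: "matching E M \<Longrightarrow> M \<subseteq> E"
  by (simp add: matching_def)

lemma matching_unique_edge:
  "matching E M \<Longrightarrow> f1 \<in> M \<Longrightarrow> f2 \<in> M \<Longrightarrow> x \<in> f1 \<Longrightarrow> x \<in> f2 \<Longrightarrow> f1 = f2"
  unfolding matching_def by blast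

lemma matching_iff_unique_edge:
  "matching E M \<longleftrightarrow> M \<subseteq> E \<and> (\<forall>f1\<in>M. \<forall>f2\<in>M. \<forall>x\<in>f1. x \<in> f2 \<longrightarrow> f1 = f2)"
  unfolding matching_def by blast

lemma matching_empty [simp]: "matching E {}"
  by (simp add: matching_def)

lemma finite_matching: "finite E \<Longrightarrow> matching E M \<Longrightarrow> finite M"
  by (meson finite_subset matching_subset)

lemma finite_matchings: "finite E \<Longrightarrow> finite {M. matching E M}"
  by (rule finite_subset[of _ "Pow E"]) (auto simp: matching_def)

lemma maximal_matching_iff_dominating:
  assumes "{} \<notin> E"
  shows "maximal_matching E M \<longleftrightarrow> matching E M \<and> (\<forall>e\<in>E. e \<inter> \<Union>M \<noteq> {})"
proof (intro iffI conjI ballI)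
  assume max: "maximal_matching E M"
  then show "matching E M" by (simp add: maximal_matching_def)
  fix e assume e: "e \<in> E"
  show "e \<inter> \<Union>M \<noteq> {}"
  proof
    assume disj: "e \<inter> \<Union>M = {}"
    moreover have "e \<noteq> {}" using e assms by auto
    ultimately have "e \<notin> M" by auto
    moreover have "matching E (insert e M)"
      using max e disj unfolding maximal_matching_def matching_def by blast
    ultimately show False using max unfolding maximal_matching_def by blast
  qed
next
  assume "matching E M \<and> (\<forall>e\<in>E. e \<inter> \<Union>M \<noteq> {})"
  then have mat: "matching E M" and dom: "\<forall>e\<in>E. e \<inter> \<Union>M \<noteq> {}" by blast+
  show "maximal_matching E M"
    unfolding maximal_matching_def
  proof (intro conjI mat allI impI)
    fix M' assume M': "matching E M' \<and> M \<subseteq> M'"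
    show "M' = M"
    proof (rule ccontr)
      assume "M' \<noteq> M"
      then obtain e where e: "e \<in> M'" "e \<notin> M" using M' by blast
      have "e \<in> E" using e M' by (auto dest: matching_subset)
      then obtain f x where "f \<in> M" "x \<in> e" "x \<in> f" using dom by blast
      then show False using e M' matching_unique_edge[of E M' e f x] by auto
    qed
  qed
qed

lemma card_Union_matching:
  assumes "matching E M" "\<forall>e\<in>E. card e = 2"
  shows "card (\<Union>M) = 2 * card M"
proof -
  have "\<forall>e\<in>M. finite e"
    using assms by (metis card.infinite matching_subset subsetD zero_neq_numeral)
  moreover have "pairwise disjnt M"
    using assms(1) by (auto simp: matching_def pairwise_def disjnt_def)
  ultimately have "card (\<Union>M) = (\<Sum>e\<in>M. card e)"
    by (intro card_Union_disjoint) auto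
  also have "\<dots> = (\<Sum>e\<in>M. 2)" using assms by (intro sum.cong) (auto dest: matching_subset)
  also have "\<dots> = 2 * card M" by simp
  finally show ?thesis .
qed

lemma matching_le_matching_number:
  "finite E \<Longrightarrow> matching E M \<Longrightarrow> card M \<le> matching_number E"
  unfolding matching_number_def by (rule Max_ge) (auto simp: finite_matchings)

lemma obtain_maximum_matching:
  assumes "finite E"
  obtains N where "matching E N" "card N = matching_number E"
proof -
  have "matching_number E \<in> card ` {M. matching E M}"
    unfolding matching_number_def
    using finite_matchings[OF assms] by (intro Max_in) (auto intro: matching_empty)
  then show ?thesis using that by auto
qed

lemma maximum_matching_is_maximal:
  assumes "finite E" "matching E N" "card N = matching_number E"
  shows "maximal_matching E N"
  unfolding maximal_matching_def
proof (intro conjI assms(2) allI impI)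
  fix M' assume M': "matching E M' \<and> N \<subseteq> M'"
  then have "finite M'" "card M' \<le> card N"
    using assms finite_matching[of E M'] matching_le_matching_number[of E M'] by auto
  then show "M' = N" using M' by (metis card_seteq)
qed

lemma finite_maximal_matchings: "finite E \<Longrightarrow> finite {M. maximal_matching E M}"
  by (rule finite_subset[OF _ finite_matchings]) (auto simp: maximal_matching_def)

lemma saturation_number_le:
  "finite E \<Longrightarrow> maximal_matching E M \<Longrightarrow> saturation_number E \<le> card M"
  unfolding saturation_number_def by (rule Min_le) (auto simp: finite_maximal_matchings)

lemma obtain_minimum_maximal_matching:
  assumes "finite E"
  obtains M where "maximal_matching E M" "card M = saturation_number E"
proof -
  obtain N where "matching E N" "card N = matching_number E"
    using obtain_maximum_matching[OF assms] .
  then have "{M. maximal_matching E M} \<noteq> {}"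
    using maximum_matching_is_maximal[OF assms] by blast
  then have "saturation_number E \<in> card ` {M. maximal_matching E M}"
    unfolding saturation_number_def
    using finite_maximal_matchings[OF assms] by (intro Min_in) auto
  then show ?thesis using that by auto
qed

lemma simple_graph_edgeE:
  assumes "simple_graph V E" "e \<in> E"
  obtains u v where "u \<noteq> v" "u \<in> V" "v \<in> V" "e = {u, v}"
  using assms unfolding simple_graph_def by blast

lemma simple_graph_finite_edges:
  assumes "simple_graph V E" shows "finite E"
proof (rule finite_subset[of _ "Pow V"])
  show "E \<subseteq> Pow V" using assms by (blast elim: simple_graph_edgeE)
  show "finite (Pow V)" using assms by (simp add: simple_graph_def)
qed

lemma simple_graph_card_edge: "simple_graph V E \<Longrightarrow> e \<in> E \<Longrightarrow> card e = 2"
  by (erule simple_graph_edgeE) auto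

lemma simple_graph_empty_notin: "simple_graph V E \<Longrightarrow> {} \<notin> E"
  by (metis insert_not_empty simple_graph_edgeE)

lemma simple_graph_edge_subset: "simple_graph V E \<Longrightarrow> e \<in> E \<Longrightarrow> e \<subseteq> V"
  by (erule simple_graph_edgeE) auto

lemma card_Union_matching_simple_graph:
  "simple_graph V E \<Longrightarrow> matching E M \<Longrightarrow> card (\<Union>M) = 2 * card M"
  by (intro card_Union_matching) (auto intro: simple_graph_card_edge)

lemma Union_matching_subset: "simple_graph V E \<Longrightarrow> matching E M \<Longrightarrow> \<Union>M \<subseteq> V"
  using simple_graph_edge_subset matching_subset by blast

lemma twice_card_matching_le:
  assumes "simple_graph V E" "matching E M"
  shows "2 * card M \<le> card V"
proof -
  have "finite V" using assms(1) by (simp add: simple_graph_def)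
  with Union_matching_subset[OF assms] have "card (\<Union>M) \<le> card V" by (rule card_mono[rotated])
  then show ?thesis using card_Union_matching_simple_graph[OF assms] by simp
qed

lemma card_Diff_Union_matching:
  assumes "simple_graph V E" "matching E M"
  shows "card (V - \<Union>M) = card V - 2 * card M"
proof -
  have "finite V" using assms(1) by (simp add: simple_graph_def)
  with Union_matching_subset[OF assms] card_Union_matching_simple_graph[OF assms]
  show ?thesis by (simp add: card_Diff_subset finite_subset)
qed

section \<open>Paths\<close>

lemma div_le_of_le_mult_add:
  fixes m q c r :: nat
  assumes "m \<le> q * c + r" "r < q"
  shows "m div q \<le> c"
proof -
  have "m < Suc c * q" using assms by (simp add: algebra_simps)
  then have "m div q < Suc c" using assms(2) by (simp add: div_less_iff_less_mult)
  then show ?thesis by simp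
qed

lemma Suc_div_3_eq: "(m :: nat) mod 3 \<noteq> 2 \<Longrightarrow> Suc m div 3 = m div 3"
  by (simp add: div_Suc mod_Suc)

lemma Suc_div_3_plus_of_bool: "(m + 1) div 3 + of_bool (m mod 3 = 1) = (m + 2) div (3 :: nat)"
proof -
  have "m mod 3 < 3" by simp
  then consider "m mod 3 = 0" | "m mod 3 = 1" | "m mod 3 = 2" by linarith
  then show ?thesis by cases (simp_all add: div_Suc mod_Suc)
qed

lemma Suc_div_3_plus_of_bool_le:
  "(m :: nat) \<le> 3 * c \<Longrightarrow> (m + 1) div 3 + of_bool (m mod 3 = 1) \<le> c"
  unfolding Suc_div_3_plus_of_bool using div_le_of_le_mult_add[of "m + 2" 3 c 2] by simp

lemma mem_path_edges: "e \<in> path_edges m \<longleftrightarrow> (\<exists>i. Suc i < m \<and> e = {i, Suc i})"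
  by (auto simp: path_edges_def)

lemma simple_graph_path: "simple_graph (path_verts m) (path_edges m)"
proof -
  have "\<exists>u v. u \<noteq> v \<and> u \<in> {0..<m} \<and> v \<in> {0..<m} \<and> {i, Suc i} = {u, v}" if "Suc i < m" for i
    using that by (intro exI[of _ i] exI[of _ "Suc i"]) auto
  then show ?thesis unfolding simple_graph_def path_verts_def path_edges_def by auto
qed

lemma finite_path_edges: "finite (path_edges m)"
  using simple_graph_path by (rule simple_graph_finite_edges)

lemma card_path_edge: "e \<in> path_edges m \<Longrightarrow> card e = 2"
  using simple_graph_path by (rule simple_graph_card_edge)

lemma maximal_path_matching_iff:
  "maximal_matching (path_edges m) M \<longleftrightarrow>
     matching (path_edges m) M \<and> (\<forall>e\<in>path_edges m. e \<inter> \<Union>M \<noteq> {})"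
  using simple_graph_path by (intro maximal_matching_iff_dominating simple_graph_empty_notin)

text \<open>A vertex covered by neither \<open>P\<close> nor \<open>S\<close>, other than the last one, is the left neighbour of
  a covered vertex, which lies in \<open>S\<close> or is the smaller end of an edge of \<open>P\<close>.\<close>
lemma path_verts_covered:
  assumes P: "P \<subseteq> path_edges m" and dom: "\<forall>e\<in>path_edges m. e \<inter> (\<Union>P \<union> S) \<noteq> {}"
  shows "{..<m} \<subseteq> \<Union>P \<union> S \<union> (\<lambda>e. Min e - 1) ` P \<union> (\<lambda>y. y - 1) ` S \<union> {m - 1}"
proof
  fix x assume x: "x \<in> {..<m}"
  show "x \<in> \<Union>P \<union> S \<union> (\<lambda>e. Min e - 1) ` P \<union> (\<lambda>y. y - 1) ` S \<union> {m - 1}"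
  proof (cases "x \<in> \<Union>P \<union> S \<or> x = m - 1")
    case False
    then have xP: "x \<notin> \<Union>P" and "Suc x < m" using x by auto
    then have "{x, Suc x} \<in> path_edges m" by (auto simp: mem_path_edges)
    with dom have "{x, Suc x} \<inter> (\<Union>P \<union> S) \<noteq> {}" by blast
    with False have "Suc x \<in> \<Union>P \<union> S" by auto
    then consider "Suc x \<in> S" | e where "e \<in> P" "Suc x \<in> e" by blast
    then show ?thesis
    proof cases
      case 1
      then have "x \<in> (\<lambda>y. y - 1) ` S" by (intro image_eqI[of _ _ "Suc x"]) auto
      then show ?thesis by blast
    next
      case 2
      have "e \<in> path_edges m" using 2(1) P by blast
      then obtain i where i: "e = {i, Suc i}" unfolding mem_path_edges by blast
      have "i \<noteq> x" using 2(1) xP i by auto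
      then have "i = Suc x" using 2(2) i by auto
      then have "x = Min e - 1" using i by simp
      then have "x \<in> (\<lambda>e. Min e - 1) ` P" using 2(1) by blast
      then show ?thesis by blast
    qed
  qed auto
qed

lemma path_domination_bound:
  assumes P: "P \<subseteq> path_edges m" and S: "finite S"
    and dom: "\<forall>e\<in>path_edges m. e \<inter> (\<Union>P \<union> S) \<noteq> {}"
  shows "m \<le> 3 * card P + 2 * card S + 1"
proof -
  define pred_P where "pred_P = (\<lambda>e. Min e - 1) ` P"
  define pred_S where "pred_S = (\<lambda>y. y - 1) ` S"
  have finP: "finite P" using P finite_path_edges by (rule finite_subset)
  have twoP: "\<forall>e\<in>P. card e = 2" using P card_path_edge by blast
  have "finite (\<Union>P)"
    using finP twoP by (intro finite_Union) (auto intro: card_ge_0_finite)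
  then have "finite (\<Union>P \<union> S \<union> pred_P \<union> pred_S \<union> {m - 1})"
    using finP S unfolding pred_P_def pred_S_def by simp
  from card_mono[OF this path_verts_covered[OF P dom, folded pred_P_def pred_S_def]]
  have "m \<le> card (\<Union>P \<union> S \<union> pred_P \<union> pred_S \<union> {m - 1})" by simp
  also have "\<dots> \<le> card (\<Union>P) + card S + card pred_P + card pred_S + card {m - 1}"
    using card_Un_le[of "\<Union>P \<union> S \<union> pred_P \<union> pred_S" "{m - 1}"]
      card_Un_le[of "\<Union>P \<union> S \<union> pred_P" pred_S] card_Un_le[of "\<Union>P \<union> S" pred_P]
      card_Un_le[of "\<Union>P" S] by linarith
  also have "card (\<Union>P) \<le> (\<Sum>e\<in>P. card e)" by (rule card_Union_le_sum_card)
  also have "(\<Sum>e\<in>P. card e) = 2 * card P" using twoP by simp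
  also have "card pred_P \<le> card P" unfolding pred_P_def by (rule card_image_le[OF finP])
  also have "card pred_S \<le> card S" unfolding pred_S_def by (rule card_image_le[OF S])
  finally show ?thesis by simp
qed

definition every_third_edge :: "nat \<Rightarrow> nat \<Rightarrow> nat set set" where
  "every_third_edge d m = (\<lambda>k. {3 * k + d, 3 * k + d + 1}) ` {k. 3 * k + d + 1 < m}"

lemma mem_Union_every_third_edge:
  "x \<in> \<Union>(every_third_edge d m) \<longleftrightarrow>
     (\<exists>k. 3 * k + d + 1 < m \<and> (x = 3 * k + d \<or> x = 3 * k + d + 1))"
  by (auto simp: every_third_edge_def)

lemma matching_every_third_edge: "matching (path_edges m) (every_third_edge d m)"
  unfolding matching_def
proof (intro conjI ballI impI)
  show "every_third_edge d m \<subseteq> path_edges m"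
    by (auto simp: every_third_edge_def mem_path_edges)
  fix e1 e2 assume "e1 \<in> every_third_edge d m" "e2 \<in> every_third_edge d m" "e1 \<noteq> e2"
  then obtain a b where "e1 = {3 * a + d, 3 * a + d + 1}" "e2 = {3 * b + d, 3 * b + d + 1}" "a \<noteq> b"
    by (auto simp: every_third_edge_def)
  then show "e1 \<inter> e2 = {}" by auto
qed

lemma card_every_third_edge: "card (every_third_edge d m) = (m + 1 - d) div 3"
proof -
  have "{k. 3 * k + d + 1 < m} = {..<(m + 1 - d) div 3}" by auto
  moreover have "inj (\<lambda>k. {3 * k + d, 3 * k + d + 1})" by (auto simp: inj_def doubleton_eq_iff)
  ultimately show ?thesis
    unfolding every_third_edge_def by (simp add: card_image inj_on_subset)
qed

lemma every_third_edge_meets: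
  assumes "Suc i < m" "d \<le> Suc i" "m mod 3 = (d + 1) mod 3 \<Longrightarrow> Suc (Suc i) < m"
  shows "{i, Suc i} \<inter> \<Union>(every_third_edge d m) \<noteq> {}"
proof -
  define k where "k = (Suc i - d) div 3"
  have "Suc i = 3 * k + (Suc i - d) mod 3 + d"
    unfolding k_def using assms(2) div_mult_mod_eq[of "Suc i - d" 3] by linarith
  moreover have "(Suc i - d) mod 3 < 3" by simp
  ultimately consider "Suc i = 3 * k + d" | "Suc i = 3 * k + d + 1" | "i = 3 * k + d + 1"
    by linarith
  then have "i \<in> \<Union>(every_third_edge d m) \<or> Suc i \<in> \<Union>(every_third_edge d m)"
  proof cases
    case 1
    have "Suc (Suc i) < m"
    proof (rule ccontr)
      assume last: "\<not> Suc (Suc i) < m"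
      then have "m = 3 * k + (d + 1)" using assms(1) 1 by linarith
      then have "m mod 3 = (d + 1) mod 3" by simp
      then show False using assms(3) last by blast
    qed
    with 1 show ?thesis unfolding mem_Union_every_third_edge by auto
  next
    case 2
    with assms(1) show ?thesis unfolding mem_Union_every_third_edge by auto
  next
    case 3
    with assms(1) have "3 * k + d + 1 < m" by linarith
    with 3 show ?thesis unfolding mem_Union_every_third_edge by blast
  qed
  then show ?thesis by blast
qed

lemma path_edges_met_by_every_third_edge:
  assumes "d \<le> 1" "m mod 3 \<noteq> (d + 1) mod 3"
  shows "\<forall>e\<in>path_edges m. e \<inter> \<Union>(every_third_edge d m) \<noteq> {}"
proof
  fix e assume "e \<in> path_edges m"
  then obtain i where i: "Suc i < m" "e = {i, Suc i}" unfolding mem_path_edges by blast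
  show "e \<inter> \<Union>(every_third_edge d m) \<noteq> {}"
    unfolding i(2)
  proof (rule every_third_edge_meets[OF i(1)])
    show "d \<le> Suc i" using assms(1) by simp
    show "Suc (Suc i) < m" if "m mod 3 = (d + 1) mod 3" using that assms(2) by blast
  qed
qed

lemma saturation_number_path: "saturation_number (path_edges m) = (m + 1) div 3"
proof (rule antisym)
  obtain d where d: "d \<le> 1" "m mod 3 \<noteq> (d + 1) mod 3" "(m + 1 - d) div 3 = (m + 1) div 3"
  proof (cases "m mod 3 = 2")
    case True
    then show ?thesis using that[of 0] by simp
  next
    case False
    then show ?thesis using that[of 1] Suc_div_3_eq[of m] by simp
  qed
  from d(1,2) have "maximal_matching (path_edges m) (every_third_edge d m)"
    unfolding maximal_path_matching_iff
    by (intro conjI matching_every_third_edge path_edges_met_by_every_third_edge)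
  then have "saturation_number (path_edges m) \<le> card (every_third_edge d m)"
    by (rule saturation_number_le[OF finite_path_edges])
  also have "\<dots> = (m + 1) div 3" unfolding card_every_third_edge by (rule d(3))
  finally show "saturation_number (path_edges m) \<le> (m + 1) div 3" .
next
  obtain M where M: "maximal_matching (path_edges m) M" "card M = saturation_number (path_edges m)"
    using obtain_minimum_maximal_matching[OF finite_path_edges] .
  then have "m \<le> 3 * card M + 1"
    using path_domination_bound[of M m "{}"] matching_subset
    unfolding maximal_path_matching_iff by auto
  then show "(m + 1) div 3 \<le> saturation_number (path_edges m)"
    using div_le_of_le_mult_add[of "m + 1" 3 "card M" 2] M(2) by simp
qed

text \<open>Models the copy of \<open>P\<^sub>m\<close> at a hub whose spoke ends at vertex \<open>j\<close> of the copy.\<close>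
lemma obtain_path_matching_with_spoke:
  assumes "m \<ge> 1"
  obtains P j where "matching (path_edges m) P" "j < m" "j \<notin> \<Union>P"
    "\<forall>e\<in>path_edges m. e \<inter> (\<Union>P \<union> {j}) \<noteq> {}"
    "card P + 1 = (m + 1) div 3 + of_bool (m mod 3 = 1)"
proof (cases "m mod 3 = 1")
  case True
  have "\<forall>e\<in>path_edges m. e \<inter> \<Union>(every_third_edge 1 m) \<noteq> {}"
    using True by (intro path_edges_met_by_every_third_edge) auto
  moreover have "0 \<notin> \<Union>(every_third_edge 1 m)" by (auto simp: every_third_edge_def)
  moreover have "card (every_third_edge 1 m) + 1 = (m + 1) div 3 + of_bool (m mod 3 = 1)"
    unfolding card_every_third_edge using True Suc_div_3_eq[of m] by simp
  ultimately show ?thesis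
    using that[of "every_third_edge 1 m" 0] assms matching_every_third_edge by simp
next
  case False
  have "\<forall>e\<in>path_edges m. e \<inter> (\<Union>(every_third_edge 3 m) \<union> {1}) \<noteq> {}"
  proof
    fix e assume "e \<in> path_edges m"
    then obtain i where i: "Suc i < m" "e = {i, Suc i}" unfolding mem_path_edges by blast
    show "e \<inter> (\<Union>(every_third_edge 3 m) \<union> {1}) \<noteq> {}"
    proof (cases "i \<le> 1")
      case False
      then have "e \<inter> \<Union>(every_third_edge 3 m) \<noteq> {}"
        unfolding i(2) using i(1) \<open>m mod 3 \<noteq> 1\<close> by (intro every_third_edge_meets) auto
      then show ?thesis by blast
    next
      case True
      then have "1 \<in> e" using i by auto
      then show ?thesis by blast
    qed
  qed
  moreover have "1 \<notin> \<Union>(every_third_edge 3 m)" by (auto simp: every_third_edge_def)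
  moreover have "m \<ge> 2" using assms False by (cases "m = 1") auto
  moreover have "card (every_third_edge 3 m) + 1 = (m + 1) div 3 + of_bool (m mod 3 = 1)"
    unfolding card_every_third_edge using False \<open>m \<ge> 2\<close> by simp
  ultimately show ?thesis
    using that[of "every_third_edge 3 m" 1] matching_every_third_edge by simp
qed

section \<open>Matchings of a corona\<close>

definition copy_edge :: "'a \<Rightarrow> 'b set \<Rightarrow> ('a + 'a \<times> 'b) set" where
  "copy_edge v e = (\<lambda>w. Inr (v, w)) ` e"

definition spoke :: "'a \<Rightarrow> 'b \<Rightarrow> ('a + 'a \<times> 'b) set" where
  "spoke v w = {Inl v, Inr (v, w)}"

definition hub_edges :: "'a \<Rightarrow> 'b set set \<Rightarrow> 'b set \<Rightarrow> ('a + 'a \<times> 'b) set set" where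
  "hub_edges v P J = copy_edge v ` P \<union> spoke v ` J"

lemma Inl_notin_copy_edge [simp]: "Inl u \<notin> copy_edge v e"
  by (auto simp: copy_edge_def)

lemma Inr_in_copy_edge [simp]: "Inr (v', w) \<in> copy_edge v e \<longleftrightarrow> v' = v \<and> w \<in> e"
  by (auto simp: copy_edge_def)

lemma Inl_in_spoke [simp]: "Inl u \<in> spoke v w \<longleftrightarrow> u = v"
  by (simp add: spoke_def)

lemma Inr_in_spoke [simp]: "Inr (v', w') \<in> spoke v w \<longleftrightarrow> v' = v \<and> w' = w"
  by (simp add: spoke_def)

lemma Inr_notin_Inl_image [simp]: "Inr p \<notin> Inl ` g"
  by auto

lemma copy_edge_empty_iff [simp]: "copy_edge v e = {} \<longleftrightarrow> e = {}"
  by (simp add: copy_edge_def)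

lemma inj_copy_edge: "inj (copy_edge v)"
  unfolding copy_edge_def by (rule injI) (simp add: inj_image_eq_iff inj_def)

lemma spoke_eq_iff [simp]: "spoke v w = spoke v' w' \<longleftrightarrow> v = v' \<and> w = w'"
  by (auto simp: spoke_def doubleton_eq_iff)

lemma copy_edge_neq_spoke [simp]: "copy_edge v e \<noteq> spoke v' w"
  by (metis Inl_in_spoke Inl_notin_copy_edge)

lemma card_hub_edges:
  assumes "finite P" "finite J"
  shows "card (hub_edges v P J) = card P + card J"
proof -
  have "card (hub_edges v P J) = card (copy_edge v ` P) + card (spoke v ` J)"
    unfolding hub_edges_def using assms by (intro card_Un_disjoint) auto
  also have "card (copy_edge v ` P) = card P"
    by (rule card_image) (rule inj_on_subset[OF inj_copy_edge subset_UNIV])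
  also have "card (spoke v ` J) = card J"
    by (rule card_image) (simp add: inj_on_def)
  finally show ?thesis .
qed

lemma hub_edge_meets_copy:
  assumes "f \<in> hub_edges v P J" "{} \<notin> P"
  obtains w where "Inr (v, w) \<in> f"
proof -
  from assms(1) consider e where "e \<in> P" "f = copy_edge v e" | w where "f = spoke v w"
    unfolding hub_edges_def by blast
  then show ?thesis
  proof cases
    case 1
    then have "e \<noteq> {}" using assms(2) by blast
    then obtain w where "w \<in> e" by blast
    then show ?thesis using 1 that by auto
  qed (use that in auto)
qed

lemma hub_edge_meets_only_its_copy:
  "f \<in> hub_edges v P J \<Longrightarrow> Inr (v', w) \<in> f \<Longrightarrow> v' = v"
  by (auto simp: hub_edges_def)

lemma mem_corona_edges:
  "f \<in> corona_edges V E V' E' \<longleftrightarrow>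
     (\<exists>g\<in>E. f = Inl ` g) \<or> (\<exists>v\<in>V. \<exists>e\<in>E'. f = copy_edge v e) \<or> (\<exists>v\<in>V. \<exists>w\<in>V'. f = spoke v w)"
  unfolding corona_edges_def copy_edge_def spoke_def by auto

lemma corona_edgesE:
  assumes "f \<in> corona_edges V E V' E'"
  obtains g where "g \<in> E" "f = Inl ` g" | v e where "v \<in> V" "e \<in> E'" "f = copy_edge v e"
    | v w where "v \<in> V" "w \<in> V'" "f = spoke v w"
  using assms unfolding mem_corona_edges by blast

text \<open>The vertex \<open>v\<close> of \<open>G\<close> is the hub of the \<open>v\<close>-th copy of \<open>H\<close>.\<close>
locale corona =
  fixes V :: "'a set" and E :: "'a set set" and V' :: "'b set" and E' :: "'b set set"
  assumes G: "simple_graph V E" and H: "simple_graph V' E'"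
begin

abbreviation C :: "('a + 'a \<times> 'b) set set" where
  "C \<equiv> corona_edges V E V' E'"

definition base_part :: "('a + 'a \<times> 'b) set set \<Rightarrow> 'a set set" where
  "base_part M = {g \<in> E. Inl ` g \<in> M}"

definition copy_part :: "('a + 'a \<times> 'b) set set \<Rightarrow> 'a \<Rightarrow> 'b set set" where
  "copy_part M v = {e \<in> E'. copy_edge v e \<in> M}"

definition spoke_part :: "('a + 'a \<times> 'b) set set \<Rightarrow> 'a \<Rightarrow> 'b set" where
  "spoke_part M v = {w \<in> V'. spoke v w \<in> M}"

definition combine ::
  "'a set set \<Rightarrow> ('a \<Rightarrow> 'b set set) \<Rightarrow> ('a \<Rightarrow> 'b set) \<Rightarrow> ('a + 'a \<times> 'b) set set"
  where "combine N P J = (image Inl) ` N \<union> (\<Union>v\<in>V. hub_edges v (P v) (J v))"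

lemma finite_V: "finite V" and finite_V': "finite V'"
  using G H by (simp_all add: simple_graph_def)

lemma finite_corona_edges: "finite C"
proof -
  have "C \<subseteq> Pow (Inl ` V \<union> Inr ` (V \<times> V'))"
    using simple_graph_edge_subset[OF G] simple_graph_edge_subset[OF H]
    by (fastforce simp: mem_corona_edges copy_edge_def spoke_def)
  then show ?thesis using finite_V finite_V' by (auto intro: finite_subset)
qed

lemma maximal_matching_corona_iff:
  "maximal_matching C M \<longleftrightarrow> matching C M \<and> (\<forall>f\<in>C. f \<inter> \<Union>M \<noteq> {})"
proof (rule maximal_matching_iff_dominating)
  show "{} \<notin> C"
    unfolding mem_corona_edges using simple_graph_empty_notin[OF G] simple_graph_empty_notin[OF H]
    by (metis copy_edge_empty_iff image_is_empty insert_not_empty spoke_def)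
qed

lemma maximal_matching_subset: "maximal_matching C M \<Longrightarrow> M \<subseteq> C"
  by (simp add: maximal_matching_def matching_subset)

lemma combine_cases:
  assumes "f \<in> combine N P J"
  obtains g where "g \<in> N" "f = Inl ` g" | v e where "v \<in> V" "e \<in> P v" "f = copy_edge v e"
    | v w where "v \<in> V" "w \<in> J v" "f = spoke v w"
  using assms unfolding combine_def hub_edges_def by blast

lemma Inl_image_in_combine: "g \<in> N \<Longrightarrow> Inl ` g \<in> combine N P J"
  and copy_edge_in_combine: "v \<in> V \<Longrightarrow> e \<in> P v \<Longrightarrow> copy_edge v e \<in> combine N P J"
  and spoke_in_combine: "v \<in> V \<Longrightarrow> w \<in> J v \<Longrightarrow> spoke v w \<in> combine N P J"
  unfolding combine_def hub_edges_def by blast+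

lemma combine_parts:
  assumes "M \<subseteq> C"
  shows "combine (base_part M) (copy_part M) (spoke_part M) = M"
proof
  show "combine (base_part M) (copy_part M) (spoke_part M) \<subseteq> M"
    by (auto elim: combine_cases simp: base_part_def copy_part_def spoke_part_def)
  show "M \<subseteq> combine (base_part M) (copy_part M) (spoke_part M)"
  proof
    fix f assume f: "f \<in> M"
    with assms have "f \<in> C" by blast
    then show "f \<in> combine (base_part M) (copy_part M) (spoke_part M)"
      by (cases rule: corona_edgesE) (use f in \<open>auto intro: Inl_image_in_combine
          copy_edge_in_combine spoke_in_combine simp: base_part_def copy_part_def spoke_part_def\<close>)
  qed
qed

lemma Inl_in_Union_combine:
  assumes "u \<in> V"
  shows "Inl u \<in> \<Union>(combine N P J) \<longleftrightarrow> u \<in> \<Union>N \<or> J u \<noteq> {}"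
proof
  assume "u \<in> \<Union>N \<or> J u \<noteq> {}"
  then obtain f where "f \<in> combine N P J" "Inl u \<in> f"
  proof (elim disjE)
    assume "u \<in> \<Union>N"
    then obtain g where "g \<in> N" "u \<in> g" by blast
    then show thesis using that[of "Inl ` g"] Inl_image_in_combine by blast
  next
    assume "J u \<noteq> {}"
    then obtain w where "w \<in> J u" by blast
    then show thesis using that[of "spoke u w"] spoke_in_combine[OF assms] by simp
  qed
  then show "Inl u \<in> \<Union>(combine N P J)" by blast
qed (auto elim: combine_cases)

lemma Inr_in_Union_combine:
  assumes "v \<in> V"
  shows "Inr (v, w) \<in> \<Union>(combine N P J) \<longleftrightarrow> w \<in> \<Union>(P v) \<union> J v"
proof
  assume "w \<in> \<Union>(P v) \<union> J v"
  then obtain f where "f \<in> combine N P J" "Inr (v, w) \<in> f"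
  proof (elim UnE)
    assume "w \<in> \<Union>(P v)"
    then obtain e where "e \<in> P v" "w \<in> e" by blast
    then show thesis using that[of "copy_edge v e"] copy_edge_in_combine[OF assms] by simp
  next
    assume "w \<in> J v"
    then show thesis using that[of "spoke v w"] spoke_in_combine[OF assms] by simp
  qed
  then show "Inr (v, w) \<in> \<Union>(combine N P J)" by blast
qed (auto simp: combine_def hub_edges_def)

lemma card_combine:
  assumes N: "N \<subseteq> E" and P: "\<And>v. v \<in> V \<Longrightarrow> P v \<subseteq> E'" and J: "\<And>v. v \<in> V \<Longrightarrow> J v \<subseteq> V'"
  shows "card (combine N P J) = card N + (\<Sum>v\<in>V. card (P v) + card (J v))"
proof -
  have finite_parts: "finite (P v)" "finite (J v)" if "v \<in> V" for v
    using finite_subset[OF P[OF that] simple_graph_finite_edges[OF H]]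
      finite_subset[OF J[OF that] finite_V'] .
  have no_empty: "{} \<notin> P v" if "v \<in> V" for v
    using P[OF that] simple_graph_empty_notin[OF H] by blast
  have "card (\<Union>v\<in>V. hub_edges v (P v) (J v)) = (\<Sum>v\<in>V. card (hub_edges v (P v) (J v)))"
  proof (rule card_UN_disjoint[OF finite_V])
    show "\<forall>v\<in>V. finite (hub_edges v (P v) (J v))"
      using finite_parts by (simp add: hub_edges_def)
    show "\<forall>v\<in>V. \<forall>v'\<in>V. v \<noteq> v' \<longrightarrow> hub_edges v (P v) (J v) \<inter> hub_edges v' (P v') (J v') = {}"
      by (metis disjoint_iff hub_edge_meets_copy hub_edge_meets_only_its_copy no_empty)
  qed
  also have "\<dots> = (\<Sum>v\<in>V. card (P v) + card (J v))"
    using finite_parts by (intro sum.cong) (simp_all add: card_hub_edges)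
  finally have hubs: "card (\<Union>v\<in>V. hub_edges v (P v) (J v)) = (\<Sum>v\<in>V. card (P v) + card (J v))" .
  have "(image Inl) ` N \<inter> (\<Union>v\<in>V. hub_edges v (P v) (J v)) = {}"
    by (auto elim: hub_edge_meets_copy dest: no_empty)
  moreover have "card ((image Inl) ` N) = card N"
    by (rule card_image) (simp add: inj_on_def inj_image_eq_iff)
  moreover have "finite N" using N simple_graph_finite_edges[OF G] by (rule finite_subset)
  ultimately show ?thesis
    unfolding combine_def hubs[symmetric]
    using finite_parts finite_V by (subst card_Un_disjoint) (simp_all add: hub_edges_def)
qed

lemma matching_base_part:
  assumes "matching C M" shows "matching E (base_part M)"
  unfolding matching_iff_unique_edge
proof (intro conjI ballI impI)
  show "base_part M \<subseteq> E" by (auto simp: base_part_def)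
  fix g1 g2 x assume "g1 \<in> base_part M" "g2 \<in> base_part M" "x \<in> g1" "x \<in> g2"
  then have "Inl ` g1 = Inl ` g2"
    using matching_unique_edge[OF assms, of "Inl ` g1" "Inl ` g2" "Inl x"]
    by (auto simp: base_part_def)
  then show "g1 = g2" by (simp add: inj_image_eq_iff)
qed

lemma matching_copy_part:
  assumes "matching C M" shows "matching E' (copy_part M v)"
  unfolding matching_iff_unique_edge
proof (intro conjI ballI impI)
  show "copy_part M v \<subseteq> E'" by (auto simp: copy_part_def)
  fix e1 e2 w assume "e1 \<in> copy_part M v" "e2 \<in> copy_part M v" "w \<in> e1" "w \<in> e2"
  then have "copy_edge v e1 = copy_edge v e2"
    using matching_unique_edge[OF assms, of "copy_edge v e1" "copy_edge v e2" "Inr (v, w)"]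
    by (auto simp: copy_part_def)
  then show "e1 = e2" by (rule injD[OF inj_copy_edge])
qed

lemma card_spoke_part_le:
  assumes "matching C M" shows "card (spoke_part M v) \<le> 1"
proof -
  have "w = w'" if "w \<in> spoke_part M v" "w' \<in> spoke_part M v" for w w'
    using that matching_unique_edge[OF assms, of "spoke v w" "spoke v w'" "Inl v"]
    by (simp add: spoke_part_def)
  moreover have "finite (spoke_part M v)"
    using finite_V' by (rule finite_subset[rotated]) (auto simp: spoke_part_def)
  ultimately show ?thesis by (simp add: card_le_Suc0_iff_eq)
qed

lemma maximal_copy_part_dominating:
  assumes max: "maximal_matching C M" and "v \<in> V" "e \<in> E'"
  shows "e \<inter> (\<Union>(copy_part M v) \<union> spoke_part M v) \<noteq> {}"
proof -
  have "copy_edge v e \<in> C" using assms(2,3) by (auto simp: mem_corona_edges)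
  then have "copy_edge v e \<inter> \<Union>M \<noteq> {}" using max maximal_matching_corona_iff by blast
  then obtain w where "w \<in> e" "Inr (v, w) \<in> \<Union>M" by (auto simp: copy_edge_def)
  moreover note combine_parts[OF maximal_matching_subset[OF max]]
  ultimately show ?thesis using Inr_in_Union_combine[OF assms(2)] by (metis disjoint_iff)
qed

lemma maximal_unsaturated_hub_covers_copy:
  assumes max: "maximal_matching C M" and "v \<in> V"
    and "v \<notin> \<Union>(base_part M)" "spoke_part M v = {}"
  shows "V' \<subseteq> \<Union>(copy_part M v)"
proof
  fix w assume "w \<in> V'"
  then have "spoke v w \<in> C" using assms(2) by (auto simp: mem_corona_edges)
  then have "spoke v w \<inter> \<Union>M \<noteq> {}" using max maximal_matching_corona_iff by blast
  moreover have parts: "\<Union>M = \<Union>(combine (base_part M) (copy_part M) (spoke_part M))"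
    using combine_parts[OF maximal_matching_subset[OF max]] by simp
  moreover have "Inl v \<notin> \<Union>M"
    unfolding parts Inl_in_Union_combine[OF assms(2)] using assms(3,4) by simp
  ultimately have "Inr (v, w) \<in> \<Union>M" by (auto simp: spoke_def)
  then show "w \<in> \<Union>(copy_part M v)"
    unfolding parts Inr_in_Union_combine[OF assms(2)] using assms(4) by simp
qed

lemma combine_edge_at_Inl:
  assumes "f \<in> combine N P J" "Inl u \<in> f"
  obtains g where "g \<in> N" "u \<in> g" "f = Inl ` g" | w where "u \<in> V" "w \<in> J u" "f = spoke u w"
  using assms(1) by (cases rule: combine_cases) (use assms(2) that in auto)

lemma combine_edge_at_Inr:
  assumes "f \<in> combine N P J" "Inr (v, w) \<in> f"
  obtains e where "v \<in> V" "e \<in> P v" "w \<in> e" "f = copy_edge v e"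
    | "v \<in> V" "w \<in> J v" "f = spoke v w"
  using assms(1) by (cases rule: combine_cases) (use assms(2) that in auto)

lemma matching_combine:
  assumes N: "matching E N"
    and P: "\<And>v. v \<in> V \<Longrightarrow> matching E' (P v)"
    and J: "\<And>v. v \<in> V \<Longrightarrow> J v \<subseteq> V'" "\<And>v. v \<in> V \<Longrightarrow> card (J v) \<le> 1"
    and J_P: "\<And>v. v \<in> V \<Longrightarrow> J v \<inter> \<Union>(P v) = {}"
    and J_N: "\<And>v. v \<in> V \<Longrightarrow> v \<in> \<Union>N \<Longrightarrow> J v = {}"
  shows "matching C (combine N P J)"
  unfolding matching_iff_unique_edge
proof (intro conjI ballI impI)
  show "combine N P J \<subseteq> C"
  proof
    fix f assume "f \<in> combine N P J"
    then show "f \<in> C"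
      unfolding mem_corona_edges
      by (cases rule: combine_cases)
        (use matching_subset[OF N] matching_subset[OF P] J(1) in blast)+
  qed
  have J_unique: "w = w'" if "v \<in> V" "w \<in> J v" "w' \<in> J v" for v w w'
  proof -
    have "finite (J v)" using finite_subset[OF J(1)[OF \<open>v \<in> V\<close>] finite_V'] .
    with J(2)[OF \<open>v \<in> V\<close>] that(2,3) show ?thesis by (auto simp: card_le_Suc0_iff_eq)
  qed
  fix f1 f2 x assume f: "f1 \<in> combine N P J" "f2 \<in> combine N P J" "x \<in> f1" "x \<in> f2"
  show "f1 = f2"
  proof (cases x)
    case (Inl u)
    from f(1,3) f(2,4) show ?thesis unfolding Inl
    proof (elim combine_edge_at_Inl)
      fix g1 g2 assume "g1 \<in> N" "u \<in> g1" "f1 = Inl ` g1" "g2 \<in> N" "u \<in> g2" "f2 = Inl ` g2"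
      then show ?thesis using matching_unique_edge[OF N] by blast
    qed (use J_N J_unique in blast)+
  next
    case (Inr p)
    then obtain v w where x: "x = Inr (v, w)" by (cases p) auto
    from f(1,3) f(2,4) show ?thesis unfolding x
    proof (elim combine_edge_at_Inr)
      fix e1 e2 assume "v \<in> V" "e1 \<in> P v" "w \<in> e1" "f1 = copy_edge v e1"
        "e2 \<in> P v" "w \<in> e2" "f2 = copy_edge v e2"
      then show ?thesis using matching_unique_edge[OF P] by blast
    qed (use J_P in blast)+
  qed
qed

lemma combine_dominating:
  assumes hubs: "\<And>u. u \<in> V \<Longrightarrow> u \<in> \<Union>N \<or> J u \<noteq> {}"
    and copies: "\<And>v e. v \<in> V \<Longrightarrow> e \<in> E' \<Longrightarrow> e \<inter> (\<Union>(P v) \<union> J v) \<noteq> {}"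
  shows "\<forall>f\<in>C. f \<inter> \<Union>(combine N P J) \<noteq> {}"
proof
  fix f assume "f \<in> C"
  then show "f \<inter> \<Union>(combine N P J) \<noteq> {}"
  proof (cases rule: corona_edgesE)
    case (1 g)
    then obtain u u' where "u \<in> V" "g = {u, u'}" using G by (auto elim: simple_graph_edgeE)
    then have "Inl u \<in> f" "Inl u \<in> \<Union>(combine N P J)"
      using 1 hubs Inl_in_Union_combine by auto
    then show ?thesis by blast
  next
    case (2 v e)
    then obtain w where "w \<in> e" "w \<in> \<Union>(P v) \<union> J v" using copies by blast
    then have "Inr (v, w) \<in> f" "Inr (v, w) \<in> \<Union>(combine N P J)"
      using 2 Inr_in_Union_combine by auto
    then show ?thesis by blast
  next
    case (3 v w)
    then have "Inl v \<in> f" "Inl v \<in> \<Union>(combine N P J)"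
      using hubs Inl_in_Union_combine by auto
    then show ?thesis by blast
  qed
qed

end

section \<open>Coronas with a path\<close>

lemma sum_const_plus_of_bool_notin:
  assumes "finite V"
  shows "(\<Sum>v\<in>V. a + of_bool (v \<notin> W) * d) = card V * a + card (V - W) * (d :: nat)"
proof -
  have "V \<inter> {v. v \<notin> W} = V - W" by blast
  then show ?thesis using assms by (simp add: sum.distrib)
qed

locale corona_path = corona V E "path_verts m" "path_edges m" for V :: "'a set" and E and m :: nat
begin

lemma card_hub_parts_ge:
  assumes max: "maximal_matching C M" and v: "v \<in> V"
  shows "(m + 1) div 3 + of_bool (v \<notin> \<Union>(base_part M)) * of_bool (m mod 3 = 1)
    \<le> card (copy_part M v) + card (spoke_part M v)"
proof -
  let ?P = "copy_part M v" and ?J = "spoke_part M v"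
  have mat: "matching C M" using max by (simp add: maximal_matching_def)
  have P: "matching (path_edges m) ?P" by (rule matching_copy_part[OF mat])
  have J: "card ?J \<le> 1" by (rule card_spoke_part_le[OF mat])
  have "finite ?J" using finite_V' by (rule finite_subset[rotated]) (auto simp: spoke_part_def)
  then have dom_bound: "m \<le> 3 * card ?P + 2 * card ?J + 1"
    using path_domination_bound[OF matching_subset[OF P]] maximal_copy_part_dominating[OF max v]
    by blast
  consider "v \<in> \<Union>(base_part M)" | "v \<notin> \<Union>(base_part M)" "?J \<noteq> {}"
    | "v \<notin> \<Union>(base_part M)" "?J = {}" by blast
  then show ?thesis
  proof cases
    case 1
    with J dom_bound show ?thesis
      using div_le_of_le_mult_add[of "m + 1" 3 "card ?P + card ?J" 2] by simp
  next
    case 2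
    with J \<open>finite ?J\<close> have "card ?J = 1" by (simp add: le_eq_less_or_eq card_gt_0_iff)
    with 2 dom_bound show ?thesis using Suc_div_3_plus_of_bool_le[of m "card ?P + 1"] by simp
  next
    case 3
    \<comment> \<open>the spokes at this hub are not dominated by \<open>Inl v\<close>, so its copy is perfectly matched\<close>
    have "\<Union>?P \<subseteq> {..<m}"
      using matching_subset[OF P] simple_graph_edge_subset[OF simple_graph_path]
      by (fastforce simp: path_verts_def)
    moreover have "{..<m} \<subseteq> \<Union>?P"
      using maximal_unsaturated_hub_covers_copy[OF max v 3] by (auto simp: path_verts_def)
    ultimately have "m = card (\<Union>?P)" by simp
    also have "\<dots> = 2 * card ?P"
      using P card_path_edge by (intro card_Union_matching) auto
    finally show ?thesis using 3 Suc_div_3_plus_of_bool_le[of m "card ?P"] by simp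
  qed
qed

lemma card_maximal_corona_matching_ge:
  assumes max: "maximal_matching C M"
  shows "card (base_part M) + card V * ((m + 1) div 3)
    + of_bool (m mod 3 = 1) * (card V - 2 * card (base_part M)) \<le> card M"
proof -
  let ?B = "base_part M" and ?d = "of_bool (m mod 3 = 1) :: nat"
  have mat: "matching C M" using max by (simp add: maximal_matching_def)
  have "card V * ((m + 1) div 3) + card (V - \<Union>?B) * ?d
      = (\<Sum>v\<in>V. (m + 1) div 3 + of_bool (v \<notin> \<Union>?B) * ?d)"
    using finite_V by (rule sum_const_plus_of_bool_notin[symmetric])
  also have "\<dots> \<le> (\<Sum>v\<in>V. card (copy_part M v) + card (spoke_part M v))"
    using card_hub_parts_ge[OF max] by (intro sum_mono) simp
  finally have "card ?B + card V * ((m + 1) div 3) + card (V - \<Union>?B) * ?d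
      \<le> card (combine ?B (copy_part M) (spoke_part M))"
    by (subst card_combine) (auto simp: base_part_def copy_part_def spoke_part_def)
  then show ?thesis
    using combine_parts[OF maximal_matching_subset[OF max]]
      card_Diff_Union_matching[OF G matching_base_part[OF mat]]
    by (simp add: mult.commute)
qed

lemma saturation_number_corona_le:
  assumes "m \<ge> 1" and N: "matching E N"
  shows "saturation_number C \<le> card N + card V * ((m + 1) div 3)
    + of_bool (m mod 3 = 1) * (card V - 2 * card N)"
proof -
  let ?d = "of_bool (m mod 3 = 1) :: nat"
  obtain Q where Q: "maximal_matching (path_edges m) Q" "card Q = (m + 1) div 3"
    using obtain_minimum_maximal_matching[OF finite_path_edges] saturation_number_path by metis
  obtain P\<^sub>0 j where P\<^sub>0: "matching (path_edges m) P\<^sub>0" "j < m" "j \<notin> \<Union>P\<^sub>0"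
    "\<forall>e\<in>path_edges m. e \<inter> (\<Union>P\<^sub>0 \<union> {j}) \<noteq> {}" "card P\<^sub>0 + 1 = (m + 1) div 3 + ?d"
    using obtain_path_matching_with_spoke[OF assms(1)] by blast
  define P where "P v = (if v \<in> \<Union>N then Q else P\<^sub>0)" for v
  define J where "J v = (if v \<in> \<Union>N then {} else {j})" for v
  have "matching C (combine N P J)"
    using N Q(1) P\<^sub>0(1-3) by (intro matching_combine)
      (auto simp: P_def J_def path_verts_def maximal_matching_def)
  moreover have "\<forall>f\<in>C. f \<inter> \<Union>(combine N P J) \<noteq> {}"
    using Q(1) P\<^sub>0(4) unfolding maximal_path_matching_iff
    by (intro combine_dominating) (auto simp: P_def J_def)
  ultimately have "maximal_matching C (combine N P J)" by (simp add: maximal_matching_corona_iff)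
  then have "saturation_number C \<le> card (combine N P J)"
    by (rule saturation_number_le[OF finite_corona_edges])
  also have "\<dots> = card N + (\<Sum>v\<in>V. card (P v) + card (J v))"
    using N Q(1) P\<^sub>0(1,2) by (intro card_combine)
      (auto simp: P_def J_def path_verts_def maximal_matching_def matching_subset)
  also have "(\<Sum>v\<in>V. card (P v) + card (J v))
      = (\<Sum>v\<in>V. (m + 1) div 3 + of_bool (v \<notin> \<Union>N) * ?d)"
    using Q(2) P\<^sub>0(5) by (intro sum.cong) (auto simp: P_def J_def)
  also have "\<dots> = card V * ((m + 1) div 3) + card (V - \<Union>N) * ?d"
    using finite_V by (rule sum_const_plus_of_bool_notin)
  finally show ?thesis using card_Diff_Union_matching[OF G N] by (simp add: mult.commute)
qed

end

theorem theorem2p4: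
  fixes V :: "'a set" and E :: "'a set set" and m :: nat
  assumes "simple_graph V E" and "m \<ge> 1"
  shows "saturation_number (corona_edges V E (path_verts m) (path_edges m)) =
    (if m mod 3 = 1
     then card V * saturation_number (path_edges m) + matching_number E
          + (card V - 2 * matching_number E)
     else card V * saturation_number (path_edges m))"
proof -
  interpret corona_path V E m
    by unfold_locales (simp_all add: assms(1) simple_graph_path)
  have finE: "finite E" using assms(1) by (rule simple_graph_finite_edges)
  obtain N where N: "matching E N" "card N = matching_number E"
    using obtain_maximum_matching[OF finE] .
  obtain M where M: "maximal_matching C M" "card M = saturation_number C"
    using obtain_minimum_maximal_matching[OF finite_corona_edges] .
  have B: "matching E (base_part M)"
    using M(1) matching_base_part by (simp add: maximal_matching_def)
  have "card (base_part M) \<le> matching_number E"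
    using matching_le_matching_number[OF finE B] .
  moreover have "2 * card (base_part M) \<le> card V" "2 * matching_number E \<le> card V"
    using twice_card_matching_le[OF assms(1)] B N by metis+
  ultimately show ?thesis
    using card_maximal_corona_matching_ge[OF M(1)] M(2) N(2)
      saturation_number_corona_le[OF assms(2) N(1)]
      saturation_number_corona_le[OF assms(2) matching_empty]
    unfolding saturation_number_path by (cases "m mod 3 = 1") auto
qed

end
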